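(* Let $\{f_i\}_{i=1}^k$ be a frame for $\mathcal{H}_n$. If $(p,q)$-surgery on $\{f_i\}_{i=1}^k$ is possible, then $(r,r-p+q)$-surgery on $\{f_i\}_{i=1}^k$ is possible for every $r=p+1,p+2,\dots,k$.
   Context: $\mathcal{H}_n$ is an $n$-dimensional real or complex Hilbert space. A sequence $\{h_i\}$ in $\mathcal{H}_n$ is a tight frame if there is $\lambda>0$ with $\sum_i|\langle f,h_i\rangle|^2=\lambda\|f\|^2$ for all $f\in\mathcal{H}_n$. For a frame $\{f_i\}_{i=1}^k$, $(p,q)$-surgery is possible if there exist $I\subseteq\{1,\dots,k\}$ with $|I|=p$ and vectors $g_1,\dots,g_q\in\mathcal{H}_n$ such that $\{f_i\}_{i\notin I}\cup\{g_j\}_{j=1}^q$ is a tight frame for $\mathcal{H}_n$. *)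

theory Defs
  imports "HOL-Analysis.Analysis"
begin

text \<open>The n-dimensional Hilbert space H_n is modelled as K^'n with K = real or complex,
  where 'n is a finite index type with CARD('n) = n.  Inner products:\<close>

definition rinner :: "real ^ 'n \<Rightarrow> real ^ 'n \<Rightarrow> real" where
  "rinner x y = (\<Sum>i\<in>UNIV. x $ i * y $ i)"

definition cinner :: "complex ^ 'n \<Rightarrow> complex ^ 'n \<Rightarrow> complex" where
  "cinner x y = (\<Sum>i\<in>UNIV. x $ i * cnj (y $ i))"

definition is_frame :: "('v \<Rightarrow> 'v \<Rightarrow> 'c::real_normed_field) \<Rightarrow> (nat \<Rightarrow> 'v::real_normed_vector) \<Rightarrow> nat \<Rightarrow> bool" where
  "is_frame ip f k \<longleftrightarrow> (\<exists>A B. 0 < A \<and> A \<le> B \<and>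
     (\<forall>x. A * (norm x)\<^sup>2 \<le> (\<Sum>i\<in>{1..k}. (norm (ip x (f i)))\<^sup>2) \<and>
          (\<Sum>i\<in>{1..k}. (norm (ip x (f i)))\<^sup>2) \<le> B * (norm x)\<^sup>2))"

definition is_tight_frame :: "('v \<Rightarrow> 'v \<Rightarrow> 'c::real_normed_field) \<Rightarrow> 'j set \<Rightarrow> ('j \<Rightarrow> 'v::real_normed_vector) \<Rightarrow> bool" where
  "is_tight_frame ip J h \<longleftrightarrow> (\<exists>c>0. \<forall>x. (\<Sum>j\<in>J. (norm (ip x (h j)))\<^sup>2) = c * (norm x)\<^sup>2)"

text \<open>(p,q)-surgery: remove the vectors f_i, i in I (|I| = p), add g_1..g_q.
  The resulting family is indexed by the disjoint union ({1..k} - I) + {1..q}.\<close>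
definition surgery_possible :: "('v \<Rightarrow> 'v \<Rightarrow> 'c::real_normed_field) \<Rightarrow> (nat \<Rightarrow> 'v::real_normed_vector) \<Rightarrow> nat \<Rightarrow> nat \<Rightarrow> nat \<Rightarrow> bool" where
  "surgery_possible ip f k p q \<longleftrightarrow> (\<exists>I g. I \<subseteq> {1..k} \<and> card I = p \<and>
     is_tight_frame ip (Inl ` ({1..k} - I) \<union> Inr ` {1..q}) (case_sum f g))"

end

theory Submission
  imports Defs
begin

text \<open>Whether a family is a tight frame depends only on the vectors it contains, not on which
  of them are labelled as surviving original vectors and which as added ones.  So, given a
  \<open>(p,q)\<close>-surgery, remove \<open>r - p\<close> further surviving vectors \<open>f i\<close> and add them back as new vectors:
  the family is unchanged and the result is an \<open>(r, r - p + q)\<close>-surgery.\<close>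

lemma sum_Inl_Inr:
  assumes "finite A" "finite B"
  shows "(\<Sum>j\<in>Inl ` A \<union> Inr ` B. h j) = (\<Sum>a\<in>A. h (Inl a)) + (\<Sum>b\<in>B. h (Inr b))"
  using sum.Plus[OF assms, of h] by (simp add: Plus_def comp_def)

lemma obtain_family_appended:
  fixes g f :: "nat \<Rightarrow> 'v"
  assumes "finite D" "card D = m"
  obtains g' where "\<And>F :: 'v \<Rightarrow> 'a::comm_monoid_add.
           (\<Sum>j\<in>{1..q+m}. F (g' j)) = (\<Sum>j\<in>{1..q}. F (g j)) + (\<Sum>i\<in>D. F (f i))"
proof -
  obtain e where e: "bij_betw e {q+1..q+m} D"
    using finite_same_card_bij[of "{q+1..q+m}" D] assms by auto
  define g' where "g' j = (if j \<le> q then g j else f (e j))" for j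
  have "(\<Sum>j\<in>{1..q+m}. F (g' j)) = (\<Sum>j\<in>{1..q}. F (g j)) + (\<Sum>i\<in>D. F (f i))"
    for F :: "'v \<Rightarrow> 'a"
  proof -
    have "{1..q+m} = {1..q} \<union> {q+1..q+m}" by auto
    then have "(\<Sum>j\<in>{1..q+m}. F (g' j))
        = (\<Sum>j\<in>{1..q}. F (g j)) + (\<Sum>j\<in>{q+1..q+m}. F (f (e j)))"
      by (simp add: sum.union_disjoint g'_def)
    also have "(\<Sum>j\<in>{q+1..q+m}. F (f (e j))) = (\<Sum>i\<in>D. F (f i))"
      using sum.reindex_bij_betw[OF e, of "\<lambda>i. F (f i)"] .
    finally show ?thesis .
  qed
  then show thesis by (rule that)
qed

lemma surgery_possible_add_removed:
  assumes "surgery_possible ip f k p q" "p + m \<le> k"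
  shows "surgery_possible ip f k (p + m) (q + m)"
proof -
  obtain I g where I: "I \<subseteq> {1..k}" "card I = p"
    and tight: "is_tight_frame ip (Inl ` ({1..k} - I) \<union> Inr ` {1..q}) (case_sum f g)"
    using assms(1) unfolding surgery_possible_def by blast
  have "finite I" using I(1) finite_subset by blast
  then have "m \<le> card ({1..k} - I)"
    using I assms(2) by (simp add: card_Diff_subset)
  then obtain D where D: "D \<subseteq> {1..k} - I" "card D = m"
    using obtain_subset_with_card_n by metis
  have "finite D" using D(1) finite_subset by blast
  then obtain g' where g': "\<And>F :: _ \<Rightarrow> real.
      (\<Sum>j\<in>{1..q+m}. F (g' j)) = (\<Sum>j\<in>{1..q}. F (g j)) + (\<Sum>i\<in>D. F (f i))"
    using obtain_family_appended[of D m q g f] D(2) by metis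
  have "I \<inter> D = {}" using D(1) by blast
  define I' where "I' = I \<union> D"
  have I': "I' \<subseteq> {1..k}" "card I' = p + m"
    using I D \<open>I \<inter> D = {}\<close> \<open>finite I\<close> \<open>finite D\<close>
    unfolding I'_def by (auto simp: card_Un_disjoint)
  have same_sum: "(\<Sum>j\<in>Inl ` ({1..k} - I') \<union> Inr ` {1..q+m}. G (case_sum f g' j))
      = (\<Sum>j\<in>Inl ` ({1..k} - I) \<union> Inr ` {1..q}. G (case_sum f g j))" for G :: "_ \<Rightarrow> real"
  proof -
    have split: "{1..k} - I = ({1..k} - I') \<union> D" using D(1) by (auto simp: I'_def)
    have removed: "(\<Sum>i\<in>{1..k} - I. G (f i))
        = (\<Sum>i\<in>{1..k} - I'. G (f i)) + (\<Sum>i\<in>D. G (f i))"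
      unfolding split by (rule sum.union_disjoint) (use \<open>finite D\<close> in \<open>auto simp: I'_def\<close>)
    have "(\<Sum>j\<in>Inl ` ({1..k} - I') \<union> Inr ` {1..q+m}. G (case_sum f g' j))
        = (\<Sum>i\<in>{1..k} - I'. G (f i)) + ((\<Sum>j\<in>{1..q}. G (g j)) + (\<Sum>i\<in>D. G (f i)))"
      using g'[of G] by (simp add: sum_Inl_Inr)
    also have "\<dots> = (\<Sum>i\<in>{1..k} - I. G (f i)) + (\<Sum>j\<in>{1..q}. G (g j))"
      using removed by (simp add: ac_simps)
    also have "\<dots> = (\<Sum>j\<in>Inl ` ({1..k} - I) \<union> Inr ` {1..q}. G (case_sum f g j))"
      by (simp add: sum_Inl_Inr)
    finally show ?thesis .
  qed
  have "is_tight_frame ip (Inl ` ({1..k} - I') \<union> Inr ` {1..q+m}) (case_sum f g')"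
    using tight unfolding is_tight_frame_def
    by (simp only: same_sum[of "\<lambda>v. (norm (ip _ v))\<^sup>2"])
  then show ?thesis
    unfolding surgery_possible_def using I' by blast
qed

theorem theorem3p2:
  shows "(\<forall>(f :: nat \<Rightarrow> real ^ 'n) k p q r.
            is_frame rinner f k \<longrightarrow> surgery_possible rinner f k p q \<longrightarrow>
            p + 1 \<le> r \<longrightarrow> r \<le> k \<longrightarrow> surgery_possible rinner f k r (r - p + q))
       \<and> (\<forall>(f :: nat \<Rightarrow> complex ^ 'n) k p q r.
            is_frame cinner f k \<longrightarrow> surgery_possible cinner f k p q \<longrightarrow>
            p + 1 \<le> r \<longrightarrow> r \<le> k \<longrightarrow> surgery_possible cinner f k r (r - p + q))"
  by (intro conjI allI impI;
      metis surgery_possible_add_removed le_add_diff_inverse add.commute add_leD1)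

end
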